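(* There is an absolute constant $c>0$ such that for all $k\ge 2$, $\gamma\in(0,1/4]$ and $\varepsilon\in(0,1]$ the following holds: if each of $n$ users reports its sample via $\varepsilon$-RAPPOR and the curator applies any (possibly randomized) decision rule to the $n$ reports (so that the whole procedure is a uniformity tester over $[k]$ with distance parameter $\gamma$), then $n\ge c\,k^{3/2}/(\gamma^2\varepsilon^2)$.
   Context: $\Delta([k])$ is the set of probability distributions on $[k]=\{1,\dots,k\}$, $u$ the uniform distribution on $[k]$, $d_{TV}(p,q)=\frac12\|p-q\|_1$. Users hold i.i.d. samples $X_1,\dots,X_n$ from an unknown $p\in\Delta([k])$. The $\varepsilon$-RAPPOR mechanism maps $x\in[k]$ to a random vector $b\in\{0,1\}^k$ obtained from the one-hot vector $e_x$ by flipping each coordinate independently with probability $1/(e^{\varepsilon/2}+1)$, independently across users. A uniformity tester with distance parameter $\gamma$ must, for every $p$, output ``uniform'' with probability at least $2/3$ if $p=u$ and ``not uniform'' with probability at least $2/3$ if $d_{TV}(p,u)>\gamma$. *)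

theory Defs
  imports "HOL-Probability.Probability"
begin

definition is_dist_on :: "nat \<Rightarrow> nat pmf \<Rightarrow> bool" where
  "is_dist_on k p \<longleftrightarrow> set_pmf p \<subseteq> {1..k}"

definition unif :: "nat \<Rightarrow> nat pmf" where
  "unif k = pmf_of_set {1..k}"

definition dTV :: "nat \<Rightarrow> nat pmf \<Rightarrow> nat pmf \<Rightarrow> real" where
  "dTV k p q = (1/2) * (\<Sum>i\<in>{1..k}. \<bar>pmf p i - pmf q i\<bar>)"

text \<open>epsilon-RAPPOR: the output vector b in {0,1}^k is represented by the set of its
  coordinates (in {1..k}) equal to 1. Coordinate j of the one-hot vector e_x is flipped
  independently with probability 1/(exp(eps/2)+1).\<close>
definition flip_prob :: "real \<Rightarrow> real" where
  "flip_prob eps = 1 / (exp (eps / 2) + 1)"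

definition rappor :: "nat \<Rightarrow> real \<Rightarrow> nat \<Rightarrow> nat set pmf" where
  "rappor k eps x =
     map_pmf (\<lambda>f. {j. f j})
       (Pi_pmf {1..k} False
          (\<lambda>j. map_pmf (\<lambda>flip. (j = x) \<noteq> flip) (bernoulli_pmf (flip_prob eps))))"

definition reports :: "nat \<Rightarrow> real \<Rightarrow> nat \<Rightarrow> nat pmf \<Rightarrow> (nat \<Rightarrow> nat set) pmf" where
  "reports k eps n p = Pi_pmf {..<n} {} (\<lambda>_. bind_pmf p (rappor k eps))"

text \<open>A (possibly randomized) decision rule T maps the n reports to a distribution on
  outputs; True means "uniform", False means "not uniform".\<close>
definition accept_prob :: "nat \<Rightarrow> real \<Rightarrow> nat \<Rightarrow> ((nat \<Rightarrow> nat set) \<Rightarrow> bool pmf) \<Rightarrow> nat pmf \<Rightarrow> real" where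
  "accept_prob k eps n T p = measure_pmf.prob (bind_pmf (reports k eps n p) T) {True}"

definition rappor_uniformity_tester ::
  "nat \<Rightarrow> real \<Rightarrow> real \<Rightarrow> nat \<Rightarrow> ((nat \<Rightarrow> nat set) \<Rightarrow> bool pmf) \<Rightarrow> bool" where
  "rappor_uniformity_tester k eps gamma n T \<longleftrightarrow>
     (\<forall>p. is_dist_on k p \<longrightarrow>
        (p = unif k \<longrightarrow> accept_prob k eps n T p \<ge> 2/3) \<and>
        (dTV k p (unif k) > gamma \<longrightarrow> 1 - accept_prob k eps n T p \<ge> 2/3))"

end

theory Submission
  imports Defs "HOL-Combinatorics.Transposition"
begin

(*
  Paninski's construction: for Z \<subseteq> {1..k div 2} let p_Z move mass 4 gamma/k inside each pair
  {2i-1, 2i}, in the direction given by Z, so that every p_Z is gamma-far from uniform.  A tester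
  must tell the n-fold RAPPOR report law P_u under the uniform distribution from the average of the
  laws P_Z, and this forces the second moment E_{Z,Z'} sum_w P_Z(w) P_Z'(w) / P_u(w) to be at
  least 10/9.  By independence of the reports this moment is E_{Z,Z'} (1 + c^2 R(Z,Z'))^n, where
  c = 4 gamma/k and R(Z,Z') = sum_i (+-1)(+-1) E_i with pair energies E_i <= 8 eps^2; the cross
  terms between different pairs vanish because swapping a pair is a symmetry of the noise.  Bounding
  (1 + x)^n by exp (n x) and averaging over independent signs gives at most exp ((k/2) Y^2) with
  Y = 128 n gamma^2 eps^2 / k^2, which stays below 10/9 unless n >= k^(3/2) / (300 gamma^2 eps^2).
*)

section \<open>RAPPOR likelihoods\<close>

(* The law of a RAPPOR report of the zero vector; a report of e_x has likelihood ratio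
   rappor_ratio eps x b against it. *)
definition noise_prob :: "nat \<Rightarrow> real \<Rightarrow> nat set \<Rightarrow> real" where
  "noise_prob k eps b = (\<Prod>j\<in>{1..k}. if j \<in> b then flip_prob eps else 1 - flip_prob eps)"

definition rappor_ratio :: "real \<Rightarrow> nat \<Rightarrow> nat set \<Rightarrow> real" where
  "rappor_ratio eps x b = (if x \<in> b then exp (eps/2) else exp (-eps/2))"

lemma flip_prob_pos: "0 < flip_prob eps"
  unfolding flip_prob_def by (simp add: add_pos_pos)

lemma flip_prob_less_one: "flip_prob eps < 1"
  unfolding flip_prob_def by (simp add: add_pos_pos)

lemma one_minus_flip_prob: "1 - flip_prob eps = flip_prob eps * exp (eps/2)"
proof -
  have "0 < exp (eps/2) + 1" by (simp add: add_pos_pos)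
  then show ?thesis unfolding flip_prob_def by (simp add: field_simps)
qed

lemma flip_prob_eq: "flip_prob eps = (1 - flip_prob eps) * exp (-eps/2)"
  by (simp add: one_minus_flip_prob mult.assoc flip: exp_add)

lemma noise_prob_pos: "0 < noise_prob k eps b"
  unfolding noise_prob_def using flip_prob_pos[of eps] flip_prob_less_one[of eps]
  by (intro prod_pos) auto

lemma rappor_ratio_pos: "0 < rappor_ratio eps x b"
  by (simp add: rappor_ratio_def)

lemma rappor_ratio_bounds:
  assumes "0 \<le> eps"
  shows "exp (-eps/2) \<le> rappor_ratio eps x b" "rappor_ratio eps x b \<le> exp (eps/2)"
  using assms by (auto simp: rappor_ratio_def)

lemma pmf_map_xor: "pmf (map_pmf (\<lambda>v. c \<noteq> v) M) w = pmf M (c \<noteq> w)"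
proof -
  have "inj (\<lambda>v. c \<noteq> v)" by (auto simp: inj_def)
  moreover have "(c \<noteq> (c \<noteq> w)) = w" by auto
  ultimately show ?thesis using pmf_map_inj'[of "\<lambda>v. c \<noteq> v" M "c \<noteq> w"] by (simp only:)
qed

lemma set_pmf_rappor: "set_pmf (rappor k eps x) \<subseteq> Pow {1..k}"
  unfolding rappor_def using set_Pi_pmf_subset[of "{1..k}" False] by fastforce

lemma pmf_rappor:
  assumes b: "b \<subseteq> {1..k}" and x: "x \<in> {1..k}"
  shows "pmf (rappor k eps x) b = noise_prob k eps b * rappor_ratio eps x b"
proof -
  let ?q = "flip_prob eps"
  let ?coord = "\<lambda>j. if j \<in> b then ?q else 1 - ?q"
  have "pmf (rappor k eps x) b = pmf (Pi_pmf {1..k} False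
          (\<lambda>j. map_pmf (\<lambda>flip. (j = x) \<noteq> flip) (bernoulli_pmf ?q))) (\<lambda>j. j \<in> b)"
  proof -
    have "pmf (map_pmf (\<lambda>f. {j. f j}) M) {j. j \<in> b} = pmf M (\<lambda>j. j \<in> b)" for M
      by (rule pmf_map_inj') (auto simp: inj_def)
    then show ?thesis unfolding rappor_def by simp
  qed
  also have "\<dots> = (\<Prod>j\<in>{1..k}.
      pmf (map_pmf (\<lambda>flip. (j = x) \<noteq> flip) (bernoulli_pmf ?q)) (j \<in> b))"
    by (rule pmf_Pi') (use b in auto)
  also have "\<dots> = (\<Prod>j\<in>{1..k}. pmf (bernoulli_pmf ?q) ((j = x) \<noteq> (j \<in> b)))"
    by (simp only: pmf_map_xor)
  also have "\<dots> = (\<Prod>j\<in>{1..k}. if j = x then (if x \<in> b then 1 - ?q else ?q) else ?coord j)"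
    using flip_prob_pos[of eps] flip_prob_less_one[of eps] by (intro prod.cong) auto
  also have "\<dots> = (if x \<in> b then 1 - ?q else ?q) * (\<Prod>j\<in>{1..k} - {x}. ?coord j)"
    using x by (subst prod.remove[of _ x]) (auto intro!: prod.cong)
  also have "\<dots> = rappor_ratio eps x b * ?coord x * (\<Prod>j\<in>{1..k} - {x}. ?coord j)"
    using one_minus_flip_prob flip_prob_eq unfolding rappor_ratio_def by (auto simp: mult_ac)
  also have "\<dots> = rappor_ratio eps x b * noise_prob k eps b"
    unfolding noise_prob_def using x by (simp add: prod.remove mult.assoc)
  finally show ?thesis by simp
qed

lemma sum_rappor_likelihood:
  assumes "x \<in> {1..k}"
  shows "(\<Sum>b\<in>Pow {1..k}. noise_prob k eps b * rappor_ratio eps x b) = 1"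
proof -
  have "(\<Sum>b\<in>Pow {1..k}. noise_prob k eps b * rappor_ratio eps x b)
      = (\<Sum>b\<in>Pow {1..k}. pmf (rappor k eps x) b)"
    using assms by (intro sum.cong) (auto simp: pmf_rappor)
  also have "\<dots> = 1" by (rule sum_pmf_eq_1) (simp, rule set_pmf_rappor)
  finally show ?thesis .
qed

lemma set_pmf_bind_rappor:
  "set_pmf p \<subseteq> {1..k} \<Longrightarrow> set_pmf (p \<bind> rappor k eps) \<subseteq> Pow {1..k}"
  using set_pmf_rappor[of k eps] by (auto simp: set_bind_pmf)

lemma pmf_bind_rappor:
  assumes "set_pmf p \<subseteq> {1..k}" and "b \<subseteq> {1..k}"
  shows "pmf (p \<bind> rappor k eps) b
           = noise_prob k eps b * (\<Sum>x\<in>{1..k}. pmf p x * rappor_ratio eps x b)"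
proof -
  have "pmf (p \<bind> rappor k eps) b = (\<integral>x. pmf (rappor k eps x) b \<partial>measure_pmf p)"
    by (rule pmf_bind)
  also have "\<dots> = (\<Sum>x\<in>{1..k}. pmf p x * pmf (rappor k eps x) b)"
    using assms(1) by (subst integral_measure_pmf[of "{1..k}"]) auto
  also have "\<dots> = noise_prob k eps b * (\<Sum>x\<in>{1..k}. pmf p x * rappor_ratio eps x b)"
    using assms(2) by (simp add: pmf_rappor sum_distrib_left mult_ac)
  finally show ?thesis .
qed

definition report_space :: "nat \<Rightarrow> nat \<Rightarrow> (nat \<Rightarrow> nat set) set" where
  "report_space k n = PiE_dflt {..<n} {} (\<lambda>_. Pow {1..k})"

lemma finite_report_space: "finite (report_space k n)"
  unfolding report_space_def by (intro finite_PiE_dflt) auto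

lemma set_pmf_reports:
  assumes "set_pmf p \<subseteq> {1..k}"
  shows "set_pmf (reports k eps n p) \<subseteq> report_space k n"
proof -
  have "set_pmf (reports k eps n p) = PiE_dflt {..<n} {} (\<lambda>_. set_pmf (p \<bind> rappor k eps))"
    unfolding reports_def by (simp add: set_Pi_pmf o_def)
  then show ?thesis
    using set_pmf_bind_rappor[OF assms] unfolding report_space_def PiE_dflt_def by blast
qed

lemma pmf_reports:
  "\<omega> \<in> report_space k n \<Longrightarrow>
     pmf (reports k eps n p) \<omega> = (\<Prod>i<n. pmf (p \<bind> rappor k eps) (\<omega> i))"
  unfolding reports_def report_space_def by (subst pmf_Pi') (auto simp: PiE_dflt_def)

lemma accept_prob_eq_sum:
  assumes "set_pmf p \<subseteq> {1..k}"
  shows "accept_prob k eps n T p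
           = (\<Sum>\<omega>\<in>report_space k n. pmf (reports k eps n p) \<omega> * pmf (T \<omega>) True)"
proof -
  have "accept_prob k eps n T p = (\<integral>\<omega>. pmf (T \<omega>) True \<partial>measure_pmf (reports k eps n p))"
    unfolding accept_prob_def by (simp add: measure_pmf_single pmf_bind)
  also have "\<dots> = (\<Sum>\<omega>\<in>report_space k n. pmf (T \<omega>) True * pmf (reports k eps n p) \<omega>)"
    by (rule integral_measure_pmf_real)
       (use finite_report_space set_pmf_reports[OF assms, of eps n] in blast)+
  finally show ?thesis by (simp add: mult.commute)
qed

lemma sum_prod_PiE_dflt:
  fixes g :: "'a \<Rightarrow> 'b \<Rightarrow> 'c :: comm_semiring_1"
  assumes "finite A" "\<And>i. i \<in> A \<Longrightarrow> finite (B i)"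
  shows "(\<Sum>\<omega>\<in>PiE_dflt A d B. \<Prod>i\<in>A. g i (\<omega> i)) = (\<Prod>i\<in>A. \<Sum>b\<in>B i. g i b)"
proof -
  let ?ext = "\<lambda>h x. if x \<in> A then h x else d"
  have "inj_on ?ext (PiE A B)"
    by (rule inj_onI) (metis (no_types, lifting) PiE_ext)
  then have "(\<Sum>\<omega>\<in>PiE_dflt A d B. \<Prod>i\<in>A. g i (\<omega> i)) = (\<Sum>h\<in>PiE A B. \<Prod>i\<in>A. g i (h i))"
    by (simp add: dflt_image_PiE[symmetric] sum.reindex)
  also have "\<dots> = (\<Prod>i\<in>A. \<Sum>b\<in>B i. g i b)"
    using assms by (rule prod_sum_PiE[symmetric])
  finally show ?thesis .
qed

section \<open>Paninski's perturbed distributions\<close>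

definition pair_sign :: "nat set \<Rightarrow> nat \<Rightarrow> real" where
  "pair_sign Z i = (if i \<in> Z then 1 else -1)"

(* Paninski's perturbation: the pair {2i-1, 2i} is tilted towards its odd element iff i \<in> Z;
   for odd k the last point is left alone. *)
definition perturbation :: "nat \<Rightarrow> nat set \<Rightarrow> nat \<Rightarrow> real" where
  "perturbation m Z x =
     (if x \<in> {1..2*m} then (if odd x then 1 else -1) * pair_sign Z ((x + 1) div 2) else 0)"

definition perturbed_density :: "nat \<Rightarrow> real \<Rightarrow> nat set \<Rightarrow> nat \<Rightarrow> real" where
  "perturbed_density k g Z x = (if x \<in> {1..k} then 1/k + g/k * perturbation (k div 2) Z x else 0)"

definition perturbed :: "nat \<Rightarrow> real \<Rightarrow> nat set \<Rightarrow> nat pmf" where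
  "perturbed k g Z = embed_pmf (perturbed_density k g Z)"

lemma sum_pairs:
  fixes f :: "nat \<Rightarrow> 'a :: comm_monoid_add"
  shows "(\<Sum>x\<in>{1..2*m}. f x) = (\<Sum>i\<in>{1..m}. f (2*i - 1) + f (2*i))"
proof (induction m)
  case (Suc m)
  have "{1..2 * Suc m} = insert (2*m + 2) (insert (2*m + 1) {1..2*m})" by auto
  then show ?case using Suc by (simp add: add_ac)
qed simp

lemma sum_perturbation_mult:
  fixes h :: "nat \<Rightarrow> real"
  assumes "2*m \<le> k"
  shows "(\<Sum>x\<in>{1..k}. perturbation m Z x * h x)
           = (\<Sum>i\<in>{1..m}. pair_sign Z i * (h (2*i - 1) - h (2*i)))"
proof -
  have "(\<Sum>x\<in>{1..k}. perturbation m Z x * h x) = (\<Sum>x\<in>{1..2*m}. perturbation m Z x * h x)"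
    using assms by (intro sum.mono_neutral_right) (auto simp: perturbation_def)
  also have "\<dots> = (\<Sum>i\<in>{1..m}. pair_sign Z i * (h (2*i - 1) - h (2*i)))"
  proof (unfold sum_pairs, intro sum.cong refl)
    fix i assume i: "i \<in> {1..m}"
    then have "(2*i - 1 + 1) div 2 = i" "(2*i + 1) div 2 = i" "odd (2*i - 1)" by auto
    with i show "perturbation m Z (2*i - 1) * h (2*i - 1) + perturbation m Z (2*i) * h (2*i)
        = pair_sign Z i * (h (2*i - 1) - h (2*i))"
      unfolding perturbation_def by (auto simp: algebra_simps)
  qed
  finally show ?thesis .
qed

lemma sum_abs_perturbation:
  assumes "2*m \<le> k"
  shows "(\<Sum>x\<in>{1..k}. \<bar>perturbation m Z x\<bar>) = 2*m"
proof -
  have "(\<Sum>x\<in>{1..k}. \<bar>perturbation m Z x\<bar>) = (\<Sum>x\<in>{1..2*m}. 1)"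
    using assms by (intro sum.mono_neutral_cong_right) (auto simp: perturbation_def pair_sign_def)
  then show ?thesis by simp
qed

lemma perturbed_density_nonneg:
  assumes "0 \<le> g" "g \<le> 1"
  shows "0 \<le> perturbed_density k g Z x"
proof -
  have "\<bar>g * perturbation (k div 2) Z x\<bar> \<le> 1"
    using assms by (auto simp: perturbation_def pair_sign_def abs_mult)
  then have "0 \<le> (1 + g * perturbation (k div 2) Z x) / k" by simp
  then show ?thesis unfolding perturbed_density_def by (simp add: add_divide_distrib)
qed

lemma pmf_perturbed:
  assumes "1 \<le> k" "0 \<le> g" "g \<le> 1"
  shows "pmf (perturbed k g Z) x = perturbed_density k g Z x"
  unfolding perturbed_def
proof (rule pmf_embed_pmf)
  show "0 \<le> perturbed_density k g Z x" for x
    by (rule perturbed_density_nonneg[OF assms(2,3)])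
  have "(\<Sum>x\<in>{1..k}. perturbed_density k g Z x)
      = (\<Sum>x\<in>{1..k}. 1/k) + g/k * (\<Sum>x\<in>{1..k}. perturbation (k div 2) Z x * 1)"
    by (simp add: perturbed_density_def sum.distrib sum_distrib_left)
  also have "\<dots> = 1"
    using assms(1) by (subst sum_perturbation_mult) auto
  finally have sum1: "(\<Sum>x\<in>{1..k}. perturbed_density k g Z x) = 1" .
  have "(\<integral>\<^sup>+ x. ennreal (perturbed_density k g Z x) \<partial>count_space UNIV)
      = (\<Sum>x\<in>{1..k}. ennreal (perturbed_density k g Z x))"
    by (rule nn_integral_count_space') (auto simp: perturbed_density_def)
  also have "\<dots> = 1"
    using perturbed_density_nonneg[OF assms(2,3)] sum1 by (simp add: sum_ennreal)
  finally show "(\<integral>\<^sup>+ x. ennreal (perturbed_density k g Z x) \<partial>count_space UNIV) = 1" .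
qed

lemma set_pmf_perturbed:
  "1 \<le> k \<Longrightarrow> 0 \<le> g \<Longrightarrow> g \<le> 1 \<Longrightarrow> set_pmf (perturbed k g Z) \<subseteq> {1..k}"
  by (auto simp: set_pmf_iff pmf_perturbed perturbed_density_def split: if_splits)

lemma pmf_unif: "1 \<le> k \<Longrightarrow> pmf (unif k) x = (if x \<in> {1..k} then 1/k else 0)"
  unfolding unif_def by simp

lemma set_pmf_unif: "1 \<le> k \<Longrightarrow> set_pmf (unif k) \<subseteq> {1..k}"
  unfolding unif_def by simp

lemma dTV_perturbed_unif:
  assumes "1 \<le> k" "0 \<le> g" "g \<le> 1"
  shows "dTV k (perturbed k g Z) (unif k) = g * real (k div 2) / k"
proof -
  have "dTV k (perturbed k g Z) (unif k)
      = 1/2 * (g/k * (\<Sum>x\<in>{1..k}. \<bar>perturbation (k div 2) Z x\<bar>))"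
    unfolding dTV_def sum_distrib_left using assms
    by (intro arg_cong[where f="\<lambda>t. 1/2 * t"] sum.cong refl)
       (auto simp: pmf_perturbed pmf_unif perturbed_density_def abs_mult)
  then show ?thesis using sum_abs_perturbation[of "k div 2" k Z] by simp
qed

section \<open>The chi-square moment of a single report\<close>

definition avg_ratio :: "nat \<Rightarrow> real \<Rightarrow> nat set \<Rightarrow> real" where
  "avg_ratio k eps b = (\<Sum>x\<in>{1..k}. rappor_ratio eps x b) / k"

definition pair_diff :: "real \<Rightarrow> nat \<Rightarrow> nat set \<Rightarrow> real" where
  "pair_diff eps i b = rappor_ratio eps (2*i - 1) b - rappor_ratio eps (2*i) b"

definition signed_diff :: "nat \<Rightarrow> real \<Rightarrow> nat set \<Rightarrow> nat set \<Rightarrow> real" where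
  "signed_diff k eps Z b = (\<Sum>i\<in>{1..k div 2}. pair_sign Z i * pair_diff eps i b)"

definition pair_energy :: "nat \<Rightarrow> real \<Rightarrow> nat \<Rightarrow> real" where
  "pair_energy k eps i =
     (\<Sum>b\<in>Pow {1..k}. noise_prob k eps b * pair_diff eps i b ^ 2 / avg_ratio k eps b)"

lemma avg_ratio_pos: "1 \<le> k \<Longrightarrow> 0 < avg_ratio k eps b"
  unfolding avg_ratio_def by (intro divide_pos_pos sum_pos) (auto simp: rappor_ratio_pos)

lemma pmf_bind_rappor_unif:
  assumes "1 \<le> k" "b \<subseteq> {1..k}"
  shows "pmf (unif k \<bind> rappor k eps) b = noise_prob k eps b * avg_ratio k eps b"
  using assms by (simp add: pmf_bind_rappor[OF set_pmf_unif[OF assms(1)] assms(2)] pmf_unif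
      avg_ratio_def sum_divide_distrib)

lemma pmf_bind_rappor_perturbed:
  assumes "1 \<le> k" "0 \<le> g" "g \<le> 1" "b \<subseteq> {1..k}"
  shows "pmf (perturbed k g Z \<bind> rappor k eps) b
           = noise_prob k eps b * (avg_ratio k eps b + g/k * signed_diff k eps Z b)"
proof -
  have "(\<Sum>x\<in>{1..k}. pmf (perturbed k g Z) x * rappor_ratio eps x b)
      = (\<Sum>x\<in>{1..k}. rappor_ratio eps x b) / k
        + g/k * (\<Sum>x\<in>{1..k}. perturbation (k div 2) Z x * rappor_ratio eps x b)"
    using assms(1-3) by (simp add: pmf_perturbed perturbed_density_def sum.distrib
        sum_distrib_left sum_divide_distrib algebra_simps)
  also have "(\<Sum>x\<in>{1..k}. perturbation (k div 2) Z x * rappor_ratio eps x b)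
      = signed_diff k eps Z b"
    unfolding signed_diff_def pair_diff_def by (subst sum_perturbation_mult) auto
  finally show ?thesis
    by (simp add: pmf_bind_rappor[OF set_pmf_perturbed[OF assms(1-3)] assms(4)] avg_ratio_def)
qed

lemma sum_noise_avg_ratio:
  assumes "1 \<le> k"
  shows "(\<Sum>b\<in>Pow {1..k}. noise_prob k eps b * avg_ratio k eps b) = 1"
proof -
  have "(\<Sum>b\<in>Pow {1..k}. noise_prob k eps b * avg_ratio k eps b)
      = (\<Sum>x\<in>{1..k}. \<Sum>b\<in>Pow {1..k}. noise_prob k eps b * rappor_ratio eps x b) / k"
    unfolding avg_ratio_def
    by (simp add: sum_distrib_left sum_divide_distrib sum.swap[of _ "Pow _"])
  also have "\<dots> = (\<Sum>x\<in>{1..k}. 1) / k"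
    by (intro arg_cong[where f = "\<lambda>s. s / real k"] sum.cong refl sum_rappor_likelihood)
  finally show ?thesis using assms by simp
qed

lemma sum_noise_pair_diff:
  assumes "i \<in> {1..k div 2}"
  shows "(\<Sum>b\<in>Pow {1..k}. noise_prob k eps b * pair_diff eps i b) = 0"
proof -
  have "2*i - 1 \<in> {1..k}" "2*i \<in> {1..k}" using assms by auto
  then show ?thesis unfolding pair_diff_def
    by (simp only: right_diff_distrib sum_subtractf sum_rappor_likelihood diff_self)
qed

lemma sum_noise_signed_diff:
  "(\<Sum>b\<in>Pow {1..k}. noise_prob k eps b * signed_diff k eps Z b) = 0"
proof -
  have "(\<Sum>b\<in>Pow {1..k}. noise_prob k eps b * signed_diff k eps Z b)
      = (\<Sum>i\<in>{1..k div 2}. pair_sign Z i * (\<Sum>b\<in>Pow {1..k}. noise_prob k eps b * pair_diff eps i b))"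
    unfolding signed_diff_def by (simp add: sum_distrib_left sum.swap[of _ "Pow _"] mult_ac)
  also have "\<dots> = 0"
    by (intro sum.neutral ballI) (simp only: sum_noise_pair_diff mult_zero_right)
  finally show ?thesis .
qed

lemma rappor_ratio_image_transpose:
  "rappor_ratio eps x (Transposition.transpose a c ` b)
     = rappor_ratio eps (Transposition.transpose a c x) b"
  unfolding rappor_ratio_def by (simp add: in_transpose_image_iff)

lemma noise_prob_image_transpose:
  assumes "a \<in> {1..k}" "c \<in> {1..k}"
  shows "noise_prob k eps (Transposition.transpose a c ` b) = noise_prob k eps b"
  unfolding noise_prob_def in_transpose_image_iff
  using assms by (intro prod.reindex_bij_betw) simp

lemma avg_ratio_image_transpose:
  assumes "a \<in> {1..k}" "c \<in> {1..k}"
  shows "avg_ratio k eps (Transposition.transpose a c ` b) = avg_ratio k eps b"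
  unfolding avg_ratio_def rappor_ratio_image_transpose
  using assms by (subst sum.reindex_bij_betw) simp_all

(* Swapping the pair {2i-1, 2i} flips the sign of pair_diff i and fixes everything else. *)
lemma sum_pair_diff_orthogonal:
  assumes i: "i \<in> {1..k div 2}" and j: "j \<in> {1..k div 2}" and "i \<noteq> j"
  shows "(\<Sum>b\<in>Pow {1..k}. noise_prob k eps b * pair_diff eps i b * pair_diff eps j b
           / avg_ratio k eps b) = 0"
proof -
  let ?t = "Transposition.transpose (2*i - 1) (2*i)"
  let ?F = "\<lambda>b. noise_prob k eps b * pair_diff eps i b * pair_diff eps j b / avg_ratio k eps b"
  have pair: "2*i - 1 \<in> {1..k}" "2*i \<in> {1..k}" using i by auto
  have "pair_diff eps i (?t ` b) = - pair_diff eps i b" for b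
    unfolding pair_diff_def rappor_ratio_image_transpose using i by simp
  moreover have "pair_diff eps j (?t ` b) = pair_diff eps j b" for b
    unfolding pair_diff_def rappor_ratio_image_transpose using assms
    by (subst (1 2) transpose_apply_other) auto
  ultimately have odd_F: "?F (?t ` b) = - ?F b" for b
    by (simp only: noise_prob_image_transpose[OF pair] avg_ratio_image_transpose[OF pair])
  have "bij_betw (image ?t) (Pow {1..k}) (Pow {1..k})"
    using pair by (intro bij_betw_image_Pow) simp
  then have "(\<Sum>b\<in>Pow {1..k}. ?F b) = (\<Sum>b\<in>Pow {1..k}. ?F (?t ` b))"
    by (rule sum.reindex_bij_betw[symmetric])
  also have "\<dots> = - (\<Sum>b\<in>Pow {1..k}. ?F b)"
    by (simp only: odd_F sum_negf)
  finally show ?thesis by simp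
qed

lemma sum_signed_diff_product:
  "(\<Sum>b\<in>Pow {1..k}. noise_prob k eps b * signed_diff k eps Z b * signed_diff k eps Z' b
      / avg_ratio k eps b)
   = (\<Sum>i\<in>{1..k div 2}. pair_sign Z i * pair_sign Z' i * pair_energy k eps i)"
proof -
  let ?G = "\<lambda>i j. \<Sum>b\<in>Pow {1..k}.
              noise_prob k eps b * pair_diff eps i b * pair_diff eps j b / avg_ratio k eps b"
  have "(\<Sum>b\<in>Pow {1..k}. noise_prob k eps b * signed_diff k eps Z b * signed_diff k eps Z' b
          / avg_ratio k eps b)
      = (\<Sum>i\<in>{1..k div 2}. \<Sum>j\<in>{1..k div 2}. pair_sign Z i * pair_sign Z' j * ?G i j)"
    unfolding signed_diff_def
    by (simp add: sum_distrib_left sum_distrib_right sum_divide_distrib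
        sum.swap[of _ "Pow _"] mult_ac)
  also have "\<dots> = (\<Sum>i\<in>{1..k div 2}. pair_sign Z i * pair_sign Z' i * ?G i i)"
  proof (rule sum.cong[OF refl])
    fix i assume i: "i \<in> {1..k div 2}"
    have "?G i j = 0" if "j \<in> {1..k div 2} - {i}" for j
      using that by (intro sum_pair_diff_orthogonal[OF i]) auto
    then have "(\<Sum>j\<in>{1..k div 2} - {i}. pair_sign Z i * pair_sign Z' j * ?G i j) = 0"
      by (intro sum.neutral ballI) (simp only: mult_zero_right)
    then show "(\<Sum>j\<in>{1..k div 2}. pair_sign Z i * pair_sign Z' j * ?G i j)
        = pair_sign Z i * pair_sign Z' i * ?G i i"
      by (subst sum.remove[OF _ i]) simp_all
  qed
  also have "\<dots> = (\<Sum>i\<in>{1..k div 2}. pair_sign Z i * pair_sign Z' i * pair_energy k eps i)"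
    by (simp add: pair_energy_def power2_eq_square mult.assoc)
  finally show ?thesis .
qed

lemma sum_bind_rappor_likelihood_ratio:
  assumes k: "1 \<le> k" and "0 \<le> g" "g \<le> 1"
  shows "(\<Sum>b\<in>Pow {1..k}. pmf (perturbed k g Z \<bind> rappor k eps) b
            * pmf (perturbed k g Z' \<bind> rappor k eps) b / pmf (unif k \<bind> rappor k eps) b)
     = 1 + (g/k)^2 * (\<Sum>i\<in>{1..k div 2}. pair_sign Z i * pair_sign Z' i * pair_energy k eps i)"
proof -
  let ?N = "noise_prob k eps" and ?A = "avg_ratio k eps"
  let ?S = "signed_diff k eps Z" and ?S' = "signed_diff k eps Z'"
  have expand: "?N b * (?A b + c * ?S b) * (?N b * (?A b + c * ?S' b)) / (?N b * ?A b)
      = ?N b * ?A b + c * (?N b * ?S b) + c * (?N b * ?S' b) + c^2 * (?N b * ?S b * ?S' b / ?A b)"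
    for b and c :: real
    using noise_prob_pos[of k eps b] avg_ratio_pos[OF k, of eps b]
    by (simp add: field_simps power2_eq_square)
  have "(\<Sum>b\<in>Pow {1..k}. pmf (perturbed k g Z \<bind> rappor k eps) b
            * pmf (perturbed k g Z' \<bind> rappor k eps) b / pmf (unif k \<bind> rappor k eps) b)
      = (\<Sum>b\<in>Pow {1..k}. ?N b * (?A b + g/k * ?S b) * (?N b * (?A b + g/k * ?S' b))
            / (?N b * ?A b))"
    using assms by (intro sum.cong refl) (simp add: pmf_bind_rappor_perturbed pmf_bind_rappor_unif)
  also have "\<dots> = 1 + (g/k)^2 * (\<Sum>i\<in>{1..k div 2}. pair_sign Z i * pair_sign Z' i * pair_energy k eps i)"
    by (simp only: expand sum.distrib sum_distrib_left[symmetric] sum_noise_avg_ratio[OF k]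
        sum_noise_signed_diff sum_signed_diff_product)
  finally show ?thesis .
qed

lemma avg_ratio_ge:
  assumes "1 \<le> k" "0 \<le> eps"
  shows "exp (-eps/2) \<le> avg_ratio k eps b"
proof -
  have "(\<Sum>x\<in>{1..k}. exp (-eps/2)) \<le> (\<Sum>x\<in>{1..k}. rappor_ratio eps x b)"
    using assms(2) by (intro sum_mono rappor_ratio_bounds)
  then show ?thesis using assms(1) unfolding avg_ratio_def by (simp add: field_simps)
qed

lemma pair_diff_sq_le:
  assumes "0 \<le> eps"
  shows "pair_diff eps i b ^ 2 \<le> (exp (eps/2) - exp (-eps/2)) ^ 2"
proof -
  have "\<bar>pair_diff eps i b\<bar> \<le> exp (eps/2) - exp (-eps/2)"
    using rappor_ratio_bounds[OF assms, of "2*i - 1" b] rappor_ratio_bounds[OF assms, of "2*i" b]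
    unfolding pair_diff_def by arith
  then show ?thesis using power_mono[OF _ abs_ge_zero, of _ _ 2] by fastforce
qed

lemma noise_div_avg_ratio_le:
  assumes "1 \<le> k" "0 \<le> eps"
  shows "noise_prob k eps b / avg_ratio k eps b
           \<le> exp eps * (noise_prob k eps b * rappor_ratio eps 1 b)"
proof -
  let ?N = "noise_prob k eps b"
  have inv: "exp (-eps/2) * exp (eps/2) = 1" by (simp flip: exp_add)
  have "?N / avg_ratio k eps b \<le> ?N / exp (-eps/2)"
    using avg_ratio_ge[OF assms] avg_ratio_pos[OF assms(1)] noise_prob_pos[of k eps b]
    by (intro divide_left_mono) auto
  also have "\<dots> = exp (eps/2) * (?N * (exp (-eps/2) * exp (eps/2)))"
    using inv by (simp add: field_simps)
  also have "\<dots> \<le> exp (eps/2) * (?N * (rappor_ratio eps 1 b * exp (eps/2)))"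
    using rappor_ratio_bounds[OF assms(2), of 1 b] noise_prob_pos[of k eps b] by simp
  also have "\<dots> = exp eps * (?N * rappor_ratio eps 1 b)"
    by (simp add: mult_ac flip: exp_add)
  finally show ?thesis .
qed

lemma pair_energy_nonneg:
  assumes "1 \<le> k"
  shows "0 \<le> pair_energy k eps i"
proof -
  have "0 \<le> noise_prob k eps b * pair_diff eps i b ^ 2 / avg_ratio k eps b" for b
    using noise_prob_pos[of k eps b] avg_ratio_pos[OF assms, of eps b] by simp
  then show ?thesis unfolding pair_energy_def by (intro sum_nonneg)
qed

lemma pair_energy_le:
  assumes "1 \<le> k" "0 \<le> eps"
  shows "pair_energy k eps i \<le> exp eps * (exp (eps/2) - exp (-eps/2)) ^ 2"
proof -
  let ?D = "(exp (eps/2) - exp (-eps/2)) ^ 2"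
  let ?N = "noise_prob k eps" and ?A = "avg_ratio k eps"
  have "pair_energy k eps i = (\<Sum>b\<in>Pow {1..k}. pair_diff eps i b ^ 2 * (?N b / ?A b))"
    unfolding pair_energy_def by (simp add: mult_ac)
  also have "\<dots> \<le> (\<Sum>b\<in>Pow {1..k}. ?D * (exp eps * (?N b * rappor_ratio eps 1 b)))"
    using assms
    by (intro sum_mono mult_mono pair_diff_sq_le noise_div_avg_ratio_le)
       (auto intro!: divide_nonneg_pos noise_prob_pos[THEN less_imp_le] avg_ratio_pos)
  also have "\<dots> = ?D * exp eps * (\<Sum>b\<in>Pow {1..k}. ?N b * rappor_ratio eps 1 b)"
    unfolding sum_distrib_left by (simp add: mult_ac)
  also have "\<dots> = exp eps * ?D"
    using assms(1) by (simp only: sum_rappor_likelihood atLeastAtMost_iff order_refl) simp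
  finally show ?thesis .
qed

lemma exp_mult_sq_diff_le:
  fixes eps :: real
  assumes "0 \<le> eps" "eps \<le> 1"
  shows "exp eps * (exp (eps/2) - exp (-eps/2))^2 \<le> 8 * eps^2"
proof -
  have "exp (eps/2) \<le> 1 + eps/2 + (eps/2)^2"
    using assms by (intro exp_bound) auto
  also have "\<dots> \<le> 1 + 3/4 * eps"
    using assms by (simp add: power2_eq_square field_simps mult_left_le)
  finally have "exp (eps/2) - exp (-eps/2) \<le> 5/4 * eps"
    using exp_ge_add_one_self[of "-eps/2"] by simp
  moreover have "0 \<le> exp (eps/2) - exp (-eps/2)" using assms by simp
  ultimately have "(exp (eps/2) - exp (-eps/2))^2 \<le> (5/4 * eps)^2"
    by (rule power_mono)
  moreover have "exp eps \<le> 3"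
    using exp_le assms by (meson exp_le_cancel_iff order_trans)
  ultimately have "exp eps * (exp (eps/2) - exp (-eps/2))^2 \<le> 3 * (5/4 * eps)^2"
    by (intro mult_mono) auto
  also have "\<dots> \<le> 8 * eps^2" by (simp add: power2_eq_square)
  finally show ?thesis .
qed

lemma sum_reports_likelihood_ratio_le:
  assumes k: "1 \<le> k" and g: "0 \<le> g" "g \<le> 1"
  shows "(\<Sum>\<omega>\<in>report_space k n. pmf (reports k eps n (perturbed k g Z)) \<omega>
            * pmf (reports k eps n (perturbed k g Z')) \<omega> / pmf (reports k eps n (unif k)) \<omega>)
     \<le> exp (n * ((g/k)^2 *
          (\<Sum>i\<in>{1..k div 2}. pair_sign Z i * pair_sign Z' i * pair_energy k eps i)))"
    (is "?lhs \<le> exp (real n * ?R)")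
proof -
  let ?Q = "\<lambda>p. pmf (p \<bind> rappor k eps)"
  let ?q = "\<lambda>b. ?Q (perturbed k g Z) b * ?Q (perturbed k g Z') b / ?Q (unif k) b"
  have "?lhs = (\<Sum>\<omega>\<in>report_space k n. \<Prod>i<n. ?q (\<omega> i))"
    by (intro sum.cong refl) (simp add: pmf_reports prod.distrib prod_dividef)
  also have "\<dots> = (\<Sum>b\<in>Pow {1..k}. ?q b) ^ n"
    unfolding report_space_def by (subst sum_prod_PiE_dflt) auto
  also have "(\<Sum>b\<in>Pow {1..k}. ?q b) = 1 + ?R"
    by (rule sum_bind_rappor_likelihood_ratio[OF assms])
  also have "(1 + ?R) ^ n \<le> exp ?R ^ n"
  proof (rule power_mono[OF exp_ge_add_one_self])
    have "0 \<le> (\<Sum>b\<in>Pow {1..k}. ?q b)" by (intro sum_nonneg) simp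
    then show "0 \<le> 1 + ?R" by (simp only: sum_bind_rappor_likelihood_ratio[OF assms])
  qed
  also have "\<dots> = exp (real n * ?R)"
    by (simp flip: exp_of_nat_mult)
  finally show ?thesis .
qed

section \<open>From tests to second moments\<close>

(* The test statistic t separates P from Q, so 0 \<le> \<Sum> P (Q/P - 1 + t/3)\<^sup>2 forces
   a large chi-square distance. *)
lemma second_moment_ge_of_test:
  fixes P Q t :: "'w \<Rightarrow> real"
  assumes "finite W"
    and P_pos: "\<And>\<omega>. \<omega> \<in> W \<Longrightarrow> 0 < P \<omega>"
    and P_sum: "(\<Sum>\<omega>\<in>W. P \<omega>) = 1" and Q_sum: "(\<Sum>\<omega>\<in>W. Q \<omega>) = 1"
    and t: "\<And>\<omega>. \<omega> \<in> W \<Longrightarrow> 0 \<le> t \<omega> \<and> t \<omega> \<le> 1"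
    and accept: "2/3 \<le> (\<Sum>\<omega>\<in>W. P \<omega> * t \<omega>)"
    and reject: "(\<Sum>\<omega>\<in>W. Q \<omega> * t \<omega>) \<le> 1/3"
  shows "10/9 \<le> (\<Sum>\<omega>\<in>W. Q \<omega>^2 / P \<omega>)"
proof -
  have "(\<Sum>\<omega>\<in>W. P \<omega> * t \<omega>^2) \<le> (\<Sum>\<omega>\<in>W. P \<omega>)"
  proof (intro sum_mono)
    fix \<omega> assume "\<omega> \<in> W"
    with t P_pos have "t \<omega>^2 \<le> 1" "0 < P \<omega>" by (auto simp: power_le_one)
    then show "P \<omega> * t \<omega>^2 \<le> P \<omega>" by (simp add: mult_left_le)
  qed
  then have Pt: "(\<Sum>\<omega>\<in>W. P \<omega> * t \<omega>^2) \<le> 1" using P_sum by simp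
  have expand: "P \<omega> * (Q \<omega> / P \<omega> - 1 + t \<omega> / 3)^2
      = Q \<omega>^2 / P \<omega> - 2 * Q \<omega> + P \<omega> + 2/3 * (Q \<omega> * t \<omega>) - 2/3 * (P \<omega> * t \<omega>)
        + 1/9 * (P \<omega> * t \<omega>^2)" if "\<omega> \<in> W" for \<omega>
    using P_pos[OF that] by (simp add: field_simps power2_eq_square)
  have "0 \<le> (\<Sum>\<omega>\<in>W. P \<omega> * (Q \<omega> / P \<omega> - 1 + t \<omega> / 3)^2)"
    using P_pos by (intro sum_nonneg) (simp add: less_imp_le)
  also have "\<dots> = (\<Sum>\<omega>\<in>W. Q \<omega>^2 / P \<omega> - 2 * Q \<omega> + P \<omega> + 2/3 * (Q \<omega> * t \<omega>)
      - 2/3 * (P \<omega> * t \<omega>) + 1/9 * (P \<omega> * t \<omega>^2))"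
    by (rule sum.cong[OF refl expand])
  also have "\<dots> = (\<Sum>\<omega>\<in>W. Q \<omega>^2 / P \<omega>) - 2 * (\<Sum>\<omega>\<in>W. Q \<omega>) + (\<Sum>\<omega>\<in>W. P \<omega>)
      + 2/3 * (\<Sum>\<omega>\<in>W. Q \<omega> * t \<omega>) - 2/3 * (\<Sum>\<omega>\<in>W. P \<omega> * t \<omega>)
      + 1/9 * (\<Sum>\<omega>\<in>W. P \<omega> * t \<omega>^2)"
    by (simp only: sum.distrib sum_subtractf sum_distrib_left)
  finally show ?thesis using P_sum Q_sum accept reject Pt by linarith
qed

lemma sum_square_mean_div:
  fixes P :: "'z \<Rightarrow> 'w \<Rightarrow> real"
  shows "(\<Sum>\<omega>\<in>W. ((\<Sum>Z\<in>Zs. P Z \<omega>) / N)^2 / U \<omega>)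
           = (\<Sum>Z\<in>Zs. \<Sum>Z'\<in>Zs. \<Sum>\<omega>\<in>W. P Z \<omega> * P Z' \<omega> / U \<omega>) / N^2"
proof -
  have "(\<Sum>\<omega>\<in>W. ((\<Sum>Z\<in>Zs. P Z \<omega>) / N)^2 / U \<omega>)
      = (\<Sum>\<omega>\<in>W. \<Sum>Z\<in>Zs. \<Sum>Z'\<in>Zs. P Z \<omega> * P Z' \<omega> / U \<omega> / N^2)"
    by (simp add: power_divide power2_eq_square sum_product sum_divide_distrib mult_ac)
  also have "\<dots> = (\<Sum>Z\<in>Zs. \<Sum>\<omega>\<in>W. \<Sum>Z'\<in>Zs. P Z \<omega> * P Z' \<omega> / U \<omega> / N^2)"
    by (rule sum.swap)
  also have "\<dots> = (\<Sum>Z\<in>Zs. \<Sum>Z'\<in>Zs. \<Sum>\<omega>\<in>W. P Z \<omega> * P Z' \<omega> / U \<omega> / N^2)"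
    by (intro sum.cong refl sum.swap)
  also have "\<dots> = (\<Sum>Z\<in>Zs. \<Sum>Z'\<in>Zs. \<Sum>\<omega>\<in>W. P Z \<omega> * P Z' \<omega> / U \<omega>) / N^2"
    by (simp only: sum_divide_distrib)
  finally show ?thesis .
qed

lemma mixture_second_moment_ge_of_test:
  fixes U t :: "'w \<Rightarrow> real" and P :: "'z \<Rightarrow> 'w \<Rightarrow> real"
  assumes "finite W" "finite Zs" "Zs \<noteq> {}"
    and U_pos: "\<And>\<omega>. \<omega> \<in> W \<Longrightarrow> 0 < U \<omega>" and U_sum: "(\<Sum>\<omega>\<in>W. U \<omega>) = 1"
    and P_sum: "\<And>Z. Z \<in> Zs \<Longrightarrow> (\<Sum>\<omega>\<in>W. P Z \<omega>) = 1"
    and t: "\<And>\<omega>. \<omega> \<in> W \<Longrightarrow> 0 \<le> t \<omega> \<and> t \<omega> \<le> 1"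
    and accept: "2/3 \<le> (\<Sum>\<omega>\<in>W. U \<omega> * t \<omega>)"
    and reject: "\<And>Z. Z \<in> Zs \<Longrightarrow> (\<Sum>\<omega>\<in>W. P Z \<omega> * t \<omega>) \<le> 1/3"
  shows "10/9 \<le> (\<Sum>Z\<in>Zs. \<Sum>Z'\<in>Zs. \<Sum>\<omega>\<in>W. P Z \<omega> * P Z' \<omega> / U \<omega>) / card Zs ^ 2"
proof -
  define N where "N = real (card Zs)"
  have N: "0 < N" using assms(2,3) unfolding N_def by (simp add: card_gt_0_iff)
  let ?Q = "\<lambda>\<omega>. (\<Sum>Z\<in>Zs. P Z \<omega>) / N"
  have "(\<Sum>\<omega>\<in>W. ?Q \<omega>) = (\<Sum>Z\<in>Zs. \<Sum>\<omega>\<in>W. P Z \<omega>) / N"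
    by (simp add: sum_divide_distrib[symmetric] sum.swap[of _ W])
  also have "\<dots> = 1" using P_sum N by (simp add: N_def)
  finally have Q_sum: "(\<Sum>\<omega>\<in>W. ?Q \<omega>) = 1" .
  have "(\<Sum>\<omega>\<in>W. ?Q \<omega> * t \<omega>) = (\<Sum>Z\<in>Zs. \<Sum>\<omega>\<in>W. P Z \<omega> * t \<omega>) / N"
    by (simp add: sum_divide_distrib[symmetric] sum_distrib_right sum.swap[of _ W])
  also have "\<dots> \<le> (\<Sum>Z\<in>Zs. 1/3) / N"
    using reject N by (intro divide_right_mono sum_mono) auto
  finally have Q_reject: "(\<Sum>\<omega>\<in>W. ?Q \<omega> * t \<omega>) \<le> 1/3" using N by (simp add: N_def)
  have "10/9 \<le> (\<Sum>\<omega>\<in>W. ?Q \<omega>^2 / U \<omega>)"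
    using assms(1) U_pos U_sum Q_sum t accept Q_reject by (rule second_moment_ge_of_test)
  then show ?thesis by (simp add: sum_square_mean_div N_def)
qed

lemma sum_Pow_exp_signed_sum:
  fixes w :: "nat \<Rightarrow> real"
  assumes "finite M"
  shows "(\<Sum>Z\<in>Pow M. exp (\<Sum>i\<in>M. pair_sign Z i * w i)) = (\<Prod>i\<in>M. exp (w i) + exp (- w i))"
proof -
  have "(\<Sum>Z\<in>Pow M. exp (\<Sum>i\<in>M. pair_sign Z i * w i))
      = (\<Sum>Z\<in>Pow M. (\<Prod>i\<in>Z. exp (w i)) * (\<Prod>i\<in>M - Z. exp (- w i)))"
  proof (intro sum.cong refl)
    fix Z assume "Z \<in> Pow M"
    then have "M \<inter> {i. i \<in> Z} = Z" "M \<inter> - {i. i \<in> Z} = M - Z" by auto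
    moreover have "exp (\<Sum>i\<in>M. pair_sign Z i * w i)
        = (\<Prod>i\<in>M. if i \<in> Z then exp (w i) else exp (- w i))"
      unfolding exp_sum[OF assms] by (intro prod.cong refl) (simp add: pair_sign_def)
    ultimately show "exp (\<Sum>i\<in>M. pair_sign Z i * w i)
        = (\<Prod>i\<in>Z. exp (w i)) * (\<Prod>i\<in>M - Z. exp (- w i))"
      using prod.If_cases[OF assms, of "\<lambda>i. i \<in> Z" "\<lambda>i. exp (w i)" "\<lambda>i. exp (- w i)"]
      by simp
  qed
  also have "\<dots> = (\<Prod>i\<in>M. exp (w i) + exp (- w i))"
    using assms by (rule prod_add[symmetric])
  finally show ?thesis .
qed

lemma exp_add_exp_uminus_le:
  fixes y :: real
  assumes "\<bar>y\<bar> \<le> 1"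
  shows "exp y + exp (- y) \<le> 2 * exp (y^2)"
proof -
  define x where "x = \<bar>y\<bar>"
  have x: "0 \<le> x" "x \<le> 1" using assms unfolding x_def by auto
  have "exp (- x) \<le> 1 / (1 + x)"
    using exp_ge_add_one_self[of x] x by (simp add: exp_minus divide_simps)
  also have "\<dots> \<le> 1 - x + x^2"
    using x by (simp add: field_simps power2_eq_square mult_nonneg_nonneg)
  finally have "exp x + exp (- x) \<le> 2 * (1 + x^2)"
    using exp_bound[OF x] by simp
  also have "\<dots> \<le> 2 * exp (x^2)"
    using exp_ge_add_one_self[of "x^2"] by (rule mult_left_mono) simp
  finally show ?thesis
    unfolding x_def by (cases "0 \<le> y") (auto simp: add.commute)
qed

lemma sum_Pow_exp_sign_products_le:
  fixes w :: "nat \<Rightarrow> real" and Y :: real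
  assumes M: "finite M" and w: "\<And>i. i \<in> M \<Longrightarrow> \<bar>w i\<bar> \<le> Y" and "Y \<le> 1"
  shows "(\<Sum>Z\<in>Pow M. \<Sum>Z'\<in>Pow M. exp (\<Sum>i\<in>M. pair_sign Z i * pair_sign Z' i * w i))
           \<le> (2 ^ card M)^2 * exp (card M * Y^2)"
proof -
  have inner: "(\<Sum>Z'\<in>Pow M. exp (\<Sum>i\<in>M. pair_sign Z i * pair_sign Z' i * w i))
      \<le> 2 ^ card M * exp (card M * Y^2)" for Z
  proof -
    let ?v = "\<lambda>i. pair_sign Z i * w i"
    have abs_v: "\<bar>?v i\<bar> \<le> Y" if "i \<in> M" for i
      using w[OF that] by (simp add: pair_sign_def abs_mult)
    have "(\<Sum>Z'\<in>Pow M. exp (\<Sum>i\<in>M. pair_sign Z i * pair_sign Z' i * w i))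
        = (\<Prod>i\<in>M. exp (?v i) + exp (- ?v i))"
      using sum_Pow_exp_signed_sum[OF M, of ?v] by (simp add: mult_ac)
    also have "\<dots> \<le> (\<Prod>i\<in>M. 2 * exp (Y^2))"
    proof (intro prod_mono conjI)
      fix i assume i: "i \<in> M"
      show "0 \<le> exp (?v i) + exp (- ?v i)" by (simp add: add_nonneg_nonneg)
      have "exp (?v i) + exp (- ?v i) \<le> 2 * exp (?v i ^ 2)"
        using abs_v[OF i] \<open>Y \<le> 1\<close> by (intro exp_add_exp_uminus_le) linarith
      also have "?v i ^ 2 \<le> Y^2"
        using abs_v[OF i] by (metis abs_ge_zero power2_abs power_mono)
      finally show "exp (?v i) + exp (- ?v i) \<le> 2 * exp (Y^2)" by simp
    qed
    also have "\<dots> = 2 ^ card M * exp (card M * Y^2)"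
      by (simp add: power_mult_distrib exp_of_nat_mult[symmetric])
    finally show ?thesis .
  qed
  have "(\<Sum>Z\<in>Pow M. \<Sum>Z'\<in>Pow M. exp (\<Sum>i\<in>M. pair_sign Z i * pair_sign Z' i * w i))
      \<le> (\<Sum>Z\<in>Pow M. 2 ^ card M * exp (card M * Y^2))"
    by (intro sum_mono inner)
  also have "\<dots> = (2 ^ card M)^2 * exp (card M * Y^2)"
    using M by (simp add: card_Pow power2_eq_square)
  finally show ?thesis .
qed

lemma exp_less_ten_ninths:
  fixes x :: real
  assumes "0 \<le> x" "x < 1/10"
  shows "exp x < 10/9"
proof -
  have "x^2 \<le> x / 10"
    using assms mult_right_mono[of x "1/10" x] by (simp add: power2_eq_square)
  moreover have "exp x \<le> 1 + x + x^2"
    using assms by (intro exp_bound) auto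
  ultimately show ?thesis using assms by linarith
qed

lemma powr_three_halves:
  assumes "0 \<le> x"
  shows "x powr (3/2) = sqrt x ^ 3"
proof -
  have "x powr (3/2) = x powr (1 + 1/2)" by simp
  also have "\<dots> = x powr 1 * x powr (1/2)" by (rule powr_add)
  also have "\<dots> = sqrt x ^ 2 * sqrt x" using assms by (simp add: powr_half_sqrt)
  finally show ?thesis by (simp add: power3_eq_cube power2_eq_square)
qed

lemma lower_bound_of_dichotomy:
  fixes k m n q :: real
  assumes k: "1 \<le> k" and q: "0 < q" and n: "0 \<le> n" and m: "0 \<le> m" "m \<le> k / 2"
    and dichotomy: "1 \<le> 128 * n * q / k^2 \<or> 10/9 \<le> exp (m * (128 * n * q / k^2)^2)"
  shows "1/300 * k powr (3/2) / q \<le> n"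
proof (rule ccontr)
  define s where "s = sqrt k"
  define Y where "Y = 128 * n * q / k^2"
  have s: "1 \<le> s" "k = s^2" unfolding s_def using k by auto
  assume "\<not> ?thesis"
  then have nq: "n * q < s^3 / 300"
    using q k by (simp add: powr_three_halves s_def field_simps)
  have "Y = 128 * (n * q) / s^4"
    unfolding Y_def s(2) by (simp add: power_mult[symmetric])
  also have "\<dots> < 128 * (s^3 / 300) / s^4"
    using nq s(1) by (intro divide_strict_right_mono) auto
  also have "\<dots> = 128 / 300 / s"
    using s(1) by (simp add: field_simps power_numeral_reduce)
  finally have Y_less: "Y < 128 / 300 / s" .
  have Y0: "0 \<le> Y" unfolding Y_def using n q by simp
  have "128 / 300 / s \<le> 128 / 300" using s(1) by (simp add: field_simps)
  with Y_less have "Y < 1" by linarith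
  have "m * Y^2 \<le> s^2 / 2 * (128 / 300 / s)^2"
    using m s Y0 Y_less by (intro mult_mono power_mono) auto
  also have "\<dots> < 1/10"
    using s(1) by (simp add: field_simps power2_eq_square)
  finally have "exp (m * Y^2) < 10/9"
    using m Y0 by (intro exp_less_ten_ninths) auto
  with \<open>Y < 1\<close> dichotomy show False unfolding Y_def by linarith
qed

lemma pmf_reports_unif_pos:
  assumes "1 \<le> k" "\<omega> \<in> report_space k n"
  shows "0 < pmf (reports k eps n (unif k)) \<omega>"
proof -
  have "\<omega> i \<subseteq> {1..k}" if "i < n" for i
    using assms(2) that unfolding report_space_def PiE_dflt_def by auto
  then show ?thesis
    using assms noise_prob_pos avg_ratio_pos[OF assms(1)]
    by (auto simp: pmf_reports pmf_bind_rappor_unif intro!: prod_pos)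
qed

lemma dTV_perturbed_unif_gt:
  assumes "2 \<le> k" "0 < gamma" "gamma \<le> 1/4"
  shows "gamma < dTV k (perturbed k (4 * gamma) Z) (unif k)"
proof -
  have "k < 4 * (k div 2)" using assms(1) by presburger
  then have "real k < 4 * real (k div 2)" by linarith
  then show ?thesis
    using assms by (simp add: dTV_perturbed_unif field_simps)
qed

lemma rappor_tester_second_moment:
  assumes k: "2 \<le> k" and gamma: "0 < gamma" "gamma \<le> 1/4"
    and T: "rappor_uniformity_tester k eps gamma n T"
  shows "10/9 \<le> (\<Sum>Z\<in>Pow {1..k div 2}. \<Sum>Z'\<in>Pow {1..k div 2}. \<Sum>\<omega>\<in>report_space k n.
      pmf (reports k eps n (perturbed k (4 * gamma) Z)) \<omega>
        * pmf (reports k eps n (perturbed k (4 * gamma) Z')) \<omega>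
        / pmf (reports k eps n (unif k)) \<omega>) / card (Pow {1..k div 2}) ^ 2"
proof (rule mixture_second_moment_ge_of_test)
  have k1: "1 \<le> k" and g: "0 \<le> 4 * gamma" "4 * gamma \<le> 1" using assms by auto
  have unif: "set_pmf (unif k) \<subseteq> {1..k}" by (rule set_pmf_unif[OF k1])
  have pert: "set_pmf (perturbed k (4 * gamma) Z) \<subseteq> {1..k}" for Z
    by (rule set_pmf_perturbed[OF k1 g])
  show "finite (report_space k n)" by (rule finite_report_space)
  show "(\<Sum>\<omega>\<in>report_space k n. pmf (reports k eps n (unif k)) \<omega>) = 1"
    by (rule sum_pmf_eq_1[OF finite_report_space set_pmf_reports[OF unif]])
  show "(\<Sum>\<omega>\<in>report_space k n. pmf (reports k eps n (perturbed k (4 * gamma) Z)) \<omega>) = 1" for Z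
    by (rule sum_pmf_eq_1[OF finite_report_space set_pmf_reports[OF pert]])
  show "2/3 \<le> (\<Sum>\<omega>\<in>report_space k n. pmf (reports k eps n (unif k)) \<omega> * pmf (T \<omega>) True)"
    using T unif unfolding rappor_uniformity_tester_def is_dist_on_def
    by (simp add: accept_prob_eq_sum[OF unif])
  show "(\<Sum>\<omega>\<in>report_space k n. pmf (reports k eps n (perturbed k (4 * gamma) Z)) \<omega>
      * pmf (T \<omega>) True) \<le> 1/3" for Z
    using T pert dTV_perturbed_unif_gt[OF k gamma]
    unfolding rappor_uniformity_tester_def is_dist_on_def
    by (force simp: accept_prob_eq_sum[OF pert])
qed (use pmf_reports_unif_pos[of k] k in \<open>auto simp: pmf_le_1\<close>)

lemma rappor_tester_dichotomy:
  assumes k: "2 \<le> k" and gamma: "0 < gamma" "gamma \<le> 1/4" and eps: "0 < eps" "eps \<le> 1"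
    and T: "rappor_uniformity_tester k eps gamma n T"
  defines "Y \<equiv> 128 * n * (gamma^2 * eps^2) / k^2"
  shows "1 \<le> Y \<or> 10/9 \<le> exp (real (k div 2) * Y^2)"
proof (cases "1 \<le> Y")
  case False
  define m where "m = k div 2"
  define w where "w i = n * ((4 * gamma) / k)^2 * pair_energy k eps i" for i
  let ?P = "\<lambda>Z. pmf (reports k eps n (perturbed k (4 * gamma) Z))"
  let ?U = "pmf (reports k eps n (unif k))"
  have k1: "1 \<le> k" and g: "0 \<le> 4 * gamma" "4 * gamma \<le> 1" using assms by auto
  have w: "\<bar>w i\<bar> \<le> Y" if "i \<in> {1..m}" for i
  proof -
    have "\<bar>w i\<bar> = n * ((4 * gamma) / k)^2 * pair_energy k eps i"
      using pair_energy_nonneg[OF k1, of eps i] unfolding w_def by (simp add: abs_mult)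
    also have "\<dots> \<le> n * ((4 * gamma) / k)^2 * (8 * eps^2)"
      using pair_energy_le[OF k1, of eps i] exp_mult_sq_diff_le[of eps] eps
      by (intro mult_left_mono) auto
    also have "\<dots> = Y" unfolding Y_def by (simp add: power2_eq_square field_simps)
    finally show ?thesis .
  qed
  let ?S = "\<Sum>Z\<in>Pow {1..m}. \<Sum>Z'\<in>Pow {1..m}. \<Sum>\<omega>\<in>report_space k n. ?P Z \<omega> * ?P Z' \<omega> / ?U \<omega>"
  have "?S \<le> (\<Sum>Z\<in>Pow {1..m}. \<Sum>Z'\<in>Pow {1..m}.
                  exp (\<Sum>i\<in>{1..m}. pair_sign Z i * pair_sign Z' i * w i))"
    using sum_reports_likelihood_ratio_le[OF k1 g]
    unfolding m_def w_def by (intro sum_mono) (simp add: sum_distrib_left mult_ac)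
  also have "\<dots> \<le> (2 ^ m)^2 * exp (m * Y^2)"
    using sum_Pow_exp_sign_products_le[of "{1..m}" w Y] w False by simp
  finally have S: "?S \<le> (2 ^ m)^2 * exp (m * Y^2)" .
  have "10/9 \<le> ?S / (2 ^ m)^2"
    using rappor_tester_second_moment[OF k gamma T] unfolding m_def by (simp add: card_Pow)
  also have "\<dots> \<le> exp (m * Y^2)"
    using S by (simp add: pos_divide_le_eq mult.commute)
  finally show ?thesis unfolding m_def by (rule disjI2)
qed simp

theorem theorem5p2:
  shows "\<exists>c>0. \<forall>k::nat. \<forall>gamma::real. \<forall>eps::real. \<forall>n::nat.
           \<forall>T :: (nat \<Rightarrow> nat set) \<Rightarrow> bool pmf.
             k \<ge> 2 \<longrightarrow> 0 < gamma \<longrightarrow> gamma \<le> 1/4 \<longrightarrow> 0 < eps \<longrightarrow> eps \<le> 1 \<longrightarrow>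
             rappor_uniformity_tester k eps gamma n T \<longrightarrow>
             real n \<ge> c * real k powr (3/2) / (gamma^2 * eps^2)"
proof (intro exI[of _ "1/300"] conjI allI impI)
  fix k n :: nat and gamma eps :: real and T :: "(nat \<Rightarrow> nat set) \<Rightarrow> bool pmf"
  assume "k \<ge> 2" "0 < gamma" "gamma \<le> 1/4" "0 < eps" "eps \<le> 1"
    and "rappor_uniformity_tester k eps gamma n T"
  then have "1 \<le> 128 * n * (gamma^2 * eps^2) / k^2
      \<or> 10/9 \<le> exp (real (k div 2) * (128 * n * (gamma^2 * eps^2) / k^2)^2)"
    by (rule rappor_tester_dichotomy)
  moreover have "real (k div 2) \<le> real k / 2" by linarith
  ultimately show "real n \<ge> 1/300 * real k powr (3/2) / (gamma^2 * eps^2)"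
    using \<open>k \<ge> 2\<close> \<open>0 < gamma\<close> \<open>0 < eps\<close> by (intro lower_bound_of_dichotomy) auto
qed simp

end
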